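(* Let $f$ be a pairwise social choice correspondence that satisfies strong Condorcet-consistency, homogeneity, strategyproofness, and $4\le k_f\le m$, and let $R,R'$ be profiles with $\mathrm{TC}(R)=\mathrm{TC}(R')$ and $|\mathrm{TC}(R)|=k_f$. Suppose there are a set $X\subseteq f(R)\cap\mathrm{TC}(R)$ and an alternative $y\in(f(R)\cap\mathrm{TC}(R))\setminus X$ such that $g_{R'}(x,y)=2+g_R(x,y)$ for all $x\in X$, and $g_{R'}(x',y')=g_R(x',y')$ for all other pairs of alternatives (i.e., all pairs $(x',y')$ other than $(x,y)$ and $(y,x)$ with $x\in X$). Then $f(R)=f(R')$ or $f(R')\cap\mathrm{TC}(R')=\mathrm{TC}(R')\setminus\{y\}$.
   Context: Let $A$ be a finite set of $m$ alternatives; a preference profile $R$ assigns a strict total order $\succ_i$ on $A$ to each voter $i$ of a finite non-empty electorate $N\subseteq\{1,2,\dots\}$; $\mathcal{R}^*(A)$ is the set of all profiles. $g_R(x,y)=|\{i: x\succ_i y\}|-|\{i: y\succ_i x\}|$; $x\succsim_R y$ iff $g_R(x,y)\ge0$, strict part $\succ_R$. A Condorcet winner is $x$ with $x\succ_R y$ for all $y\ne x$. A non-empty $X$ is dominant if $x\succ_R y$ for all $x\in X,y\notin X$; $\mathrm{TC}(R)$ is the inclusion-smallest dominant set. An SCC is $f:\mathcal{R}^*(A)\to 2^A\setminus\{\emptyset\}$; pairwise: $f(R)=f(R')$ whenever $g_R=g_{R'}$; homogeneous: $f(kR)=f(R)$ for $k$ copies $kR$ of $R$; strongly Condorcet-consistent: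 $f(R)=\{x\}$ iff $x$ is the Condorcet winner. Fishburn's extension: for $X\ne Y$, $X\succ_i^F Y$ iff $x\succ_i y$ for all $x\in X\setminus Y,y\in Y$ and for all $x\in X,y\in Y\setminus X$; $f$ is strategyproof if no voter $i$ can change only his own preference to move from $R$ to $R'$ with $f(R')\succ_i^F f(R)$. For an SCC $f$, $k_f\in\{1,\dots,m+1\}$ is the maximal value such that $\mathrm{TC}(R)\subseteq f(R)$ for all profiles $R$ with $|\mathrm{TC}(R)|<k_f$. *)

theory Defs
  imports Main
begin

text \<open>A profile assigns to each voter (a positive natural number) either None
  (not in the electorate) or Some r, r a strict total order on the alternatives A.\<close>
type_synonym 'a profile = "nat \<Rightarrow> ('a \<times> 'a) set option"

definition electorate :: "'a profile \<Rightarrow> nat set" where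
  "electorate R = {i. R i \<noteq> None}"

definition is_profile :: "'a set \<Rightarrow> 'a profile \<Rightarrow> bool" where
  "is_profile A R \<longleftrightarrow> finite (electorate R) \<and> electorate R \<noteq> {} \<and> 0 \<notin> electorate R \<and>
     (\<forall>i r. R i = Some r \<longrightarrow> r \<subseteq> A \<times> A \<and> strict_linear_order_on A r)"

definition prefers :: "'a profile \<Rightarrow> nat \<Rightarrow> 'a \<Rightarrow> 'a \<Rightarrow> bool" where
  "prefers R i x y = (case R i of None \<Rightarrow> False | Some r \<Rightarrow> (x, y) \<in> r)"

definition g :: "'a profile \<Rightarrow> 'a \<Rightarrow> 'a \<Rightarrow> int" where
  "g R x y = int (card {i \<in> electorate R. prefers R i x y})
             - int (card {i \<in> electorate R. prefers R i y x})"

definition maj_weak :: "'a profile \<Rightarrow> 'a \<Rightarrow> 'a \<Rightarrow> bool" where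
  "maj_weak R x y \<longleftrightarrow> g R x y \<ge> 0"

definition maj_strict :: "'a profile \<Rightarrow> 'a \<Rightarrow> 'a \<Rightarrow> bool" where
  "maj_strict R x y \<longleftrightarrow> maj_weak R x y \<and> \<not> maj_weak R y x"

definition condorcet_winner :: "'a set \<Rightarrow> 'a profile \<Rightarrow> 'a \<Rightarrow> bool" where
  "condorcet_winner A R x \<longleftrightarrow> x \<in> A \<and> (\<forall>y\<in>A. y \<noteq> x \<longrightarrow> maj_strict R x y)"

definition dominant :: "'a set \<Rightarrow> 'a profile \<Rightarrow> 'a set \<Rightarrow> bool" where
  "dominant A R X \<longleftrightarrow> X \<noteq> {} \<and> X \<subseteq> A \<and> (\<forall>x\<in>X. \<forall>y\<in>A - X. maj_strict R x y)"

definition TC :: "'a set \<Rightarrow> 'a profile \<Rightarrow> 'a set" where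
  "TC A R = (THE X. dominant A R X \<and> (\<forall>Y. dominant A R Y \<longrightarrow> X \<subseteq> Y))"

definition is_scc :: "'a set \<Rightarrow> ('a profile \<Rightarrow> 'a set) \<Rightarrow> bool" where
  "is_scc A f \<longleftrightarrow> (\<forall>R. is_profile A R \<longrightarrow> f R \<noteq> {} \<and> f R \<subseteq> A)"

definition pairwise_scc :: "'a set \<Rightarrow> ('a profile \<Rightarrow> 'a set) \<Rightarrow> bool" where
  "pairwise_scc A f \<longleftrightarrow> (\<forall>R R'. is_profile A R \<longrightarrow> is_profile A R' \<longrightarrow>
      (\<forall>x\<in>A. \<forall>y\<in>A. g R x y = g R' x y) \<longrightarrow> f R = f R')"

definition copies :: "nat \<Rightarrow> 'a profile \<Rightarrow> 'a profile" where
  "copies k R = (\<lambda>i. if i = 0 then None else R ((i - 1) div k + 1))"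

definition homogeneous :: "'a set \<Rightarrow> ('a profile \<Rightarrow> 'a set) \<Rightarrow> bool" where
  "homogeneous A f \<longleftrightarrow> (\<forall>R k. is_profile A R \<longrightarrow> k \<ge> 1 \<longrightarrow> f (copies k R) = f R)"

definition strongly_condorcet_consistent :: "'a set \<Rightarrow> ('a profile \<Rightarrow> 'a set) \<Rightarrow> bool" where
  "strongly_condorcet_consistent A f \<longleftrightarrow>
     (\<forall>R x. is_profile A R \<longrightarrow> (f R = {x} \<longleftrightarrow> condorcet_winner A R x))"

definition fishburn :: "('a \<times> 'a) set \<Rightarrow> 'a set \<Rightarrow> 'a set \<Rightarrow> bool" where
  "fishburn r X Y \<longleftrightarrow> X \<noteq> Y \<and> (\<forall>x\<in>X - Y. \<forall>y\<in>Y. (x, y) \<in> r)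
                              \<and> (\<forall>x\<in>X. \<forall>y\<in>Y - X. (x, y) \<in> r)"

definition strategyproof :: "'a set \<Rightarrow> ('a profile \<Rightarrow> 'a set) \<Rightarrow> bool" where
  "strategyproof A f \<longleftrightarrow> (\<forall>R R' i r. is_profile A R \<longrightarrow> is_profile A R' \<longrightarrow>
      R i = Some r \<longrightarrow> R' i \<noteq> None \<longrightarrow> (\<forall>j. j \<noteq> i \<longrightarrow> R' j = R j) \<longrightarrow>
      \<not> fishburn r (f R') (f R))"

definition kf :: "'a set \<Rightarrow> ('a profile \<Rightarrow> 'a set) \<Rightarrow> nat" where
  "kf A f = Max {k \<in> {1..card A + 1}. \<forall>R. is_profile A R \<longrightarrow> card (TC A R) < k \<longrightarrow> TC A R \<subseteq> f R}"

end

theory Submission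
  imports Defs "HOL-Library.Product_Lexorder"
begin

(*
  Adding to a profile a voter with order r together with a voter with the reversed order
  leaves g, hence the choice of a pairwise SCC, unchanged. If the first voter then switches
  to r', the margins change by those of r' minus those of r, so by strategyproofness the
  choice at any profile with these margins is not Fishburn-better for r. We use this for r'
  obtained from r by moving one alternative d down past a set B, which adds 2 to g(b, d)
  for every b in B.

  With d = y and B = X, this shows that y is not chosen in R' if f(R') differs from f(R).
  With d unchosen and B all other alternatives, it shows that demoting d arbitrarily often
  does not change the choice; eventually d leaves the top cycle, and by definition of k_f
  the smaller top cycle is chosen and dominates every alternative except d. Two distinct
  unchosen alternatives y, z in TC(R') would thus give sets dominating all but y, resp. all
  but z; these are nested, so the smaller one dominates everything, contradicting the
  minimality of TC(R').
*)

lemma g_antisym: "g R x y = - g R y x"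
  by (simp add: g_def)

lemma maj_strict_iff_g_pos: "maj_strict R x y \<longleftrightarrow> g R x y > 0"
  unfolding maj_strict_def maj_weak_def using g_antisym[of R x y] by auto

lemma abs_g_le_card_electorate:
  assumes "finite (electorate R)"
  shows "\<bar>g R x y\<bar> \<le> int (card (electorate R))"
proof -
  have "card {i \<in> electorate R. prefers R i a b} \<le> card (electorate R)" for a b
    using assms by (intro card_mono) auto
  from this[of x y] this[of y x] show ?thesis unfolding g_def by linarith
qed

lemma dominant_subset_or_superset:
  assumes "dominant A R X" "dominant A R Y"
  shows "X \<subseteq> Y \<or> Y \<subseteq> X"
proof (rule ccontr)
  assume "\<not> (X \<subseteq> Y \<or> Y \<subseteq> X)"
  then obtain a b where "a \<in> X" "a \<notin> Y" "b \<in> Y" "b \<notin> X" by blast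
  then have "maj_strict R a b" "maj_strict R b a"
    using assms unfolding dominant_def by blast+
  then show False by (simp add: maj_strict_def)
qed

lemma dominant_insert:
  assumes "dominant (A - {z}) R T" "z \<in> A" "\<forall>t\<in>T. maj_strict R t z"
  shows "dominant A R T"
  using assms unfolding dominant_def by blast

lemma ex_least_dominant:
  assumes "finite A" "A \<noteq> {}"
  shows "\<exists>X. dominant A R X \<and> (\<forall>Y. dominant A R Y \<longrightarrow> X \<subseteq> Y)"
proof -
  have "dominant A R A" using assms(2) by (simp add: dominant_def)
  then obtain X where X: "dominant A R X" and least_card: "\<forall>Y. dominant A R Y \<longrightarrow> card X \<le> card Y"
    using ex_has_least_nat[where m = card] by meson
  have "X \<subseteq> Y" if Y: "dominant A R Y" for Y
  proof (rule ccontr)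
    assume "\<not> X \<subseteq> Y"
    then have "Y \<subset> X" using dominant_subset_or_superset[OF X Y] by blast
    moreover have "finite X" using X assms(1) by (auto simp: dominant_def intro: finite_subset)
    ultimately have "card Y < card X" by (rule psubset_card_mono[rotated])
    then show False using least_card Y by (simp add: not_less[symmetric])
  qed
  then show ?thesis using X by blast
qed

lemma
  assumes "finite A" "A \<noteq> {}"
  shows TC_dominant: "dominant A R (TC A R)"
    and TC_subset_dominant: "dominant A R Y \<Longrightarrow> TC A R \<subseteq> Y"
proof -
  obtain X where X: "dominant A R X" "\<forall>Y. dominant A R Y \<longrightarrow> X \<subseteq> Y"
    using ex_least_dominant[OF assms] by blast
  have "TC A R = X" unfolding TC_def by (rule the_equality) (use X in auto)
  then show "dominant A R (TC A R)" "dominant A R Y \<Longrightarrow> TC A R \<subseteq> Y" using X by auto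
qed

lemma TC_subset: "finite A \<Longrightarrow> A \<noteq> {} \<Longrightarrow> TC A R \<subseteq> A"
  using TC_dominant unfolding dominant_def by blast

lemma TC_subset_if_card_less_kf:
  assumes "finite A" "A \<noteq> {}" "is_profile A R" "card (TC A R) < kf A f"
  shows "TC A R \<subseteq> f R"
proof -
  define K where "K = {k \<in> {1..card A + 1}. \<forall>R. is_profile A R \<longrightarrow> card (TC A R) < k \<longrightarrow> TC A R \<subseteq> f R}"
  have "card (TC A P) \<noteq> 0" for P
    using TC_dominant[OF assms(1,2), of P] finite_subset[OF TC_subset[OF assms(1,2)] assms(1)]
    by (simp add: dominant_def)
  then have "1 \<in> K" by (simp add: K_def) (metis neq0_conv)
  then have "kf A f \<in> K" unfolding kf_def K_def[symmetric] by (intro Max_in) (auto simp: K_def)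
  then show ?thesis using assms(3,4) by (simp add: K_def)
qed

definition pref_margin :: "('a \<times> 'a) set \<Rightarrow> 'a \<Rightarrow> 'a \<Rightarrow> int" where
  "pref_margin r x y = (if (x, y) \<in> r then 1 else 0) - (if (y, x) \<in> r then 1 else 0)"

lemma pref_margin_converse: "pref_margin (r\<inverse>) x y = - pref_margin r x y"
  by (simp add: pref_margin_def)

lemma g_add_voter:
  assumes "finite (electorate R)" "i \<notin> electorate R"
  shows "g (R(i := Some r)) x y = g R x y + pref_margin r x y"
proof -
  have "{j \<in> electorate (R(i := Some r)). prefers (R(i := Some r)) j a b}
      = (if (a, b) \<in> r then insert i else id) {j \<in> electorate R. prefers R j a b}" for a b
    using assms(2) by (auto simp: electorate_def prefers_def)
  moreover have "i \<notin> {j \<in> electorate R. prefers R j a b}" for a b using assms(2) by simp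
  ultimately show ?thesis using assms(1) by (simp add: g_def pref_margin_def)
qed

lemma electorate_add_voter: "electorate (R(i := Some r)) = insert i (electorate R)"
  by (auto simp: electorate_def)

lemma is_profile_add_voter:
  assumes "is_profile A R" "i > 0" "r \<subseteq> A \<times> A" "strict_linear_order_on A r"
  shows "is_profile A (R(i := Some r))"
  using assms unfolding is_profile_def by (auto simp: electorate_add_voter)

lemma strict_linear_order_on_converse:
  "strict_linear_order_on A r \<Longrightarrow> strict_linear_order_on A (r\<inverse>)"
  unfolding strict_linear_order_on_def by (auto simp: irrefl_def total_on_def trans_def)

lemma ex_voter_switch:
  assumes "is_profile A Q"
    and "r \<subseteq> A \<times> A" "strict_linear_order_on A r" "r' \<subseteq> A \<times> A" "strict_linear_order_on A r'"
  obtains P i where "is_profile A P" "is_profile A (P(i := Some r'))" "P i = Some r"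
    "\<And>a b. g P a b = g Q a b"
    "\<And>a b. g (P(i := Some r')) a b = g Q a b + pref_margin r' a b - pref_margin r a b"
proof -
  have fin: "finite (electorate Q)" using assms(1) by (simp add: is_profile_def)
  define i where "i = Max (insert 0 (electorate Q)) + 1"
  have "e \<le> Max (insert 0 (electorate Q))" if "e \<in> electorate Q" for e
    using fin that by simp
  then have fresh: "i \<notin> electorate Q" "Suc i \<notin> electorate Q"
    unfolding i_def by fastforce+
  define Q\<^sub>0 where "Q\<^sub>0 = Q(Suc i := Some (r\<inverse>))"
  have fin\<^sub>0: "finite (electorate Q\<^sub>0)" and fresh\<^sub>0: "i \<notin> electorate Q\<^sub>0"
    using fin fresh by (auto simp: Q\<^sub>0_def electorate_add_voter)
  have prof\<^sub>0: "is_profile A Q\<^sub>0"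
    unfolding Q\<^sub>0_def using assms(1-3)
    by (auto intro: is_profile_add_voter strict_linear_order_on_converse)
  have g\<^sub>0: "g Q\<^sub>0 a b = g Q a b - pref_margin r a b" for a b
    using g_add_voter[OF fin fresh(2)] by (simp add: Q\<^sub>0_def pref_margin_converse)
  show ?thesis
  proof (rule that[of "Q\<^sub>0(i := Some r)" i])
    show "is_profile A (Q\<^sub>0(i := Some r))" "is_profile A (Q\<^sub>0(i := Some r, i := Some r'))"
      using prof\<^sub>0 assms(2-5) by (auto simp: i_def intro: is_profile_add_voter)
    show "g (Q\<^sub>0(i := Some r)) a b = g Q a b" for a b
      using g_add_voter[OF fin\<^sub>0 fresh\<^sub>0] g\<^sub>0 by simp
    show "g (Q\<^sub>0(i := Some r, i := Some r')) a b = g Q a b + pref_margin r' a b - pref_margin r a b" for a b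
      using g_add_voter[OF fin\<^sub>0 fresh\<^sub>0] g\<^sub>0 by simp
  qed simp
qed

lemma ex_profile_margin_shift:
  assumes "is_profile A Q"
    and "r \<subseteq> A \<times> A" "strict_linear_order_on A r" "r' \<subseteq> A \<times> A" "strict_linear_order_on A r'"
  shows "\<exists>Q'. is_profile A Q' \<and> (\<forall>a b. g Q' a b = g Q a b + pref_margin r' a b - pref_margin r a b)"
  using ex_voter_switch[OF assms] by metis

lemma not_fishburn_margin_shift:
  assumes "pairwise_scc A f" "strategyproof A f" "is_profile A Q" "is_profile A Q'"
    and "r \<subseteq> A \<times> A" "strict_linear_order_on A r" "r' \<subseteq> A \<times> A" "strict_linear_order_on A r'"
    and "\<forall>a\<in>A. \<forall>b\<in>A. g Q' a b = g Q a b + pref_margin r' a b - pref_margin r a b"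
  shows "\<not> fishburn r (f Q') (f Q)"
proof -
  obtain P i where P: "is_profile A P" "is_profile A (P(i := Some r'))" "P i = Some r"
    "\<And>a b. g P a b = g Q a b"
    "\<And>a b. g (P(i := Some r')) a b = g Q a b + pref_margin r' a b - pref_margin r a b"
    using ex_voter_switch[OF assms(3,5-8)] by blast
  have "f P = f Q" using assms(1,3) P(1,4) unfolding pairwise_scc_def by blast
  moreover have "\<forall>a\<in>A. \<forall>b\<in>A. g (P(i := Some r')) a b = g Q' a b"
    using assms(9) P(5) by simp
  then have "f (P(i := Some r')) = f Q'"
    using assms(1,4) P(2) unfolding pairwise_scc_def by blast
  moreover have "\<not> fishburn r (f (P(i := Some r'))) (f P)"
    by (rule assms(2)[unfolded strategyproof_def, rule_format]) (use P(1-3) in auto)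
  ultimately show ?thesis by simp
qed

definition rank_order :: "'a set \<Rightarrow> ('a \<Rightarrow> 'b::linorder) \<Rightarrow> ('a \<times> 'a) set" where
  "rank_order A k = {(a, b) \<in> A \<times> A. k a < k b}"

lemma rank_order_subset: "rank_order A k \<subseteq> A \<times> A"
  by (auto simp: rank_order_def)

lemma strict_linear_order_on_rank_order:
  assumes "inj_on k A"
  shows "strict_linear_order_on A (rank_order A k)"
  unfolding strict_linear_order_on_def rank_order_def trans_def irrefl_def total_on_def
  using assms by (auto simp: inj_on_def dest: less_trans) (metis antisym_conv3)

lemma pref_margin_rank_order:
  "a \<in> A \<Longrightarrow> b \<in> A \<Longrightarrow>
    pref_margin (rank_order A k) a b = (if k a < k b then 1 else 0) - (if k b < k a then 1 else 0)"
  by (simp add: pref_margin_def rank_order_def)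

(* Pairs are compared lexicographically (Product_Lexorder): lower tiers first, ties broken by idx. *)
abbreviation tier_order :: "'a set \<Rightarrow> ('a \<Rightarrow> nat) \<Rightarrow> ('a \<Rightarrow> nat) \<Rightarrow> ('a \<times> 'a) set" where
  "tier_order A idx tier \<equiv> rank_order A (\<lambda>x. (tier x, idx x))"

lemma strict_linear_order_on_tier_order:
  "inj_on idx A \<Longrightarrow> strict_linear_order_on A (tier_order A idx tier)"
  by (rule strict_linear_order_on_rank_order) (auto simp: inj_on_def)

lemma fishburn_tier_order:
  assumes "V \<subseteq> A" "U \<subseteq> A" "V \<noteq> U"
    "\<forall>a\<in>V - U. \<forall>b\<in>U. tier a < tier b" "\<forall>a\<in>V. \<forall>b\<in>U - V. tier a < tier b"
  shows "fishburn (tier_order A idx tier) V U"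
  unfolding fishburn_def rank_order_def using assms by auto

(* The change of g caused by one voter moving d from above to below every alternative in B. *)
definition demote_shift :: "'a set \<Rightarrow> 'a \<Rightarrow> 'a \<Rightarrow> 'a \<Rightarrow> int" where
  "demote_shift B d a b = (if a \<in> B \<and> b = d then 2 else if a = d \<and> b \<in> B then -2 else 0)"

lemma pref_margin_tier_order_demote:
  assumes "a \<in> A" "b \<in> A" "tier d < t" "\<forall>x\<in>A - {d}. tier x \<noteq> tier d \<and> tier x \<noteq> t"
  shows "pref_margin (tier_order A idx (tier(d := t))) a b - pref_margin (tier_order A idx tier) a b
    = demote_shift {x \<in> A. tier d < tier x \<and> tier x < t} d a b"
  using assms(1,2) assms(4)[rule_format, of a] assms(4)[rule_format, of b] assms(3)
  by (cases "a = d"; cases "b = d") (auto simp: pref_margin_rank_order demote_shift_def)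

lemma choice_unchanged_by_demotion:
  fixes tier :: "'a \<Rightarrow> nat"
  assumes "finite A" "is_scc A f" "pairwise_scc A f" "strategyproof A f"
    and "is_profile A Q" "is_profile A Q'"
    and "tier d < t" "\<forall>x\<in>A - {d}. tier x \<noteq> tier d \<and> tier x \<noteq> t"
    and "\<forall>a\<in>A. \<forall>b\<in>A. g Q' a b = g Q a b + demote_shift {x \<in> A. tier d < tier x \<and> tier x < t} d a b"
    and "\<forall>a\<in>f Q' - f Q. \<forall>b\<in>f Q. tier a < tier b" "\<forall>a\<in>f Q'. \<forall>b\<in>f Q - f Q'. tier a < tier b"
  shows "f Q' = f Q"
proof (rule ccontr)
  assume changed: "f Q' \<noteq> f Q"
  obtain idx :: "'a \<Rightarrow> nat" where idx: "inj_on idx A"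
    using finite_imp_inj_to_nat_seg[OF assms(1)] by blast
  note slo = strict_linear_order_on_tier_order[OF idx]
  have "\<not> fishburn (tier_order A idx tier) (f Q') (f Q)"
  proof (rule not_fishburn_margin_shift[OF assms(3-6) rank_order_subset slo rank_order_subset slo])
    show "\<forall>a\<in>A. \<forall>b\<in>A. g Q' a b = g Q a b + pref_margin (tier_order A idx (tier(d := t))) a b
        - pref_margin (tier_order A idx tier) a b"
      using pref_margin_tier_order_demote[OF _ _ assms(7,8)] assms(9) by (simp add: add_diff_eq[symmetric])
  qed
  moreover have "f Q' \<subseteq> A" "f Q \<subseteq> A"
    using assms(2,5,6) by (auto simp: is_scc_def)
  ultimately show False using fishburn_tier_order[OF _ _ changed assms(10,11)] by blast
qed

lemma ex_demotion_of_unchosen: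
  assumes "finite A" "is_scc A f" "pairwise_scc A f" "strategyproof A f"
    and "is_profile A Q" "d \<in> A" "d \<notin> f Q"
  shows "\<exists>Q'. is_profile A Q' \<and> f Q' = f Q \<and>
    (\<forall>a\<in>A. \<forall>b\<in>A. g Q' a b = g Q a b + demote_shift (A - {d}) d a b)"
proof -
  obtain idx :: "'a \<Rightarrow> nat" where idx: "inj_on idx A"
    using finite_imp_inj_to_nat_seg[OF assms(1)] by blast
  note slo = strict_linear_order_on_tier_order[OF idx]
  define tier\<^sub>0 :: "'a \<Rightarrow> nat" where "tier\<^sub>0 = (\<lambda>x. if x = d then 0 else 1)"
  have "tier\<^sub>0 d < 2" "\<forall>x\<in>A - {d}. tier\<^sub>0 x \<noteq> tier\<^sub>0 d \<and> tier\<^sub>0 x \<noteq> 2"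
    and passed: "{x \<in> A. tier\<^sub>0 d < tier\<^sub>0 x \<and> tier\<^sub>0 x < 2} = A - {d}"
    by (auto simp: tier\<^sub>0_def)
  note shift = pref_margin_tier_order_demote[OF _ _ this(1,2), unfolded passed]
  obtain Q' where Q': "is_profile A Q'"
    "\<forall>a b. g Q' a b = g Q a b + pref_margin (tier_order A idx (tier\<^sub>0(d := 2))) a b
      - pref_margin (tier_order A idx tier\<^sub>0) a b"
    using ex_profile_margin_shift[OF assms(5) rank_order_subset slo[of tier\<^sub>0]
        rank_order_subset slo[of "tier\<^sub>0(d := 2)"]] by blast
  then have margins: "\<forall>a\<in>A. \<forall>b\<in>A. g Q' a b = g Q a b + demote_shift (A - {d}) d a b"
    using shift by (simp add: add_diff_eq[symmetric])
  define tier :: "'a \<Rightarrow> nat" where "tier = (\<lambda>x. if x = d then 0 else if x \<in> f Q' - f Q then 1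
    else if x \<in> f Q \<inter> f Q' then 2 else if x \<in> f Q - f Q' then 3 else 4)"
  have "{x \<in> A. tier d < tier x \<and> tier x < 5} = A - {d}" by (auto simp: tier_def)
  then have "f Q' = f Q"
    using margins assms(7)
    by (intro choice_unchanged_by_demotion[OF assms(1-5) Q'(1), of tier d 5]) (auto simp: tier_def)
  then show ?thesis using Q'(1) margins by blast
qed

lemma ex_repeated_demotion_of_unchosen:
  assumes "finite A" "is_scc A f" "pairwise_scc A f" "strategyproof A f"
    and "is_profile A Q" "d \<in> A" "d \<notin> f Q"
  shows "\<exists>Q'. is_profile A Q' \<and> f Q' = f Q \<and>
    (\<forall>a\<in>A. \<forall>b\<in>A. g Q' a b = g Q a b + int n * demote_shift (A - {d}) d a b)"
proof (induction n)
  case 0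
  show ?case using assms(5) by auto
next
  case (Suc n)
  then obtain Q\<^sub>1 where Q\<^sub>1: "is_profile A Q\<^sub>1" "f Q\<^sub>1 = f Q"
    "\<forall>a\<in>A. \<forall>b\<in>A. g Q\<^sub>1 a b = g Q a b + int n * demote_shift (A - {d}) d a b"
    by blast
  obtain Q\<^sub>2 where "is_profile A Q\<^sub>2" "f Q\<^sub>2 = f Q\<^sub>1"
    "\<forall>a\<in>A. \<forall>b\<in>A. g Q\<^sub>2 a b = g Q\<^sub>1 a b + demote_shift (A - {d}) d a b"
    using ex_demotion_of_unchosen[OF assms(1-4) Q\<^sub>1(1) assms(6)] Q\<^sub>1(2) assms(7) by auto
  then show ?case using Q\<^sub>1 by (auto simp: algebra_simps)
qed

lemma maj_strict_demotion_other:
  assumes "\<forall>a\<in>A. \<forall>b\<in>A. g Q' a b = g Q a b + c * demote_shift B d a b"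
    and "a \<in> A - {d}" "b \<in> A - {d}"
  shows "maj_strict Q' a b \<longleftrightarrow> maj_strict Q a b"
  using assms by (simp add: maj_strict_iff_g_pos demote_shift_def)

lemma dominant_diff_demoted:
  assumes "finite (electorate Q)" "dominant A Q C" "d \<in> C" "C \<noteq> {d}" "card (electorate Q) < n"
    and margins: "\<forall>a\<in>A. \<forall>b\<in>A. g Q' a b = g Q a b + int n * demote_shift (A - {d}) d a b"
  shows "dominant A Q' (C - {d})"
  unfolding dominant_def
proof (intro conjI ballI)
  show "C - {d} \<noteq> {}" "C - {d} \<subseteq> A" using assms(2-4) by (auto simp: dominant_def)
next
  fix x b assume x: "x \<in> C - {d}" and b: "b \<in> A - (C - {d})"
  have "x \<in> A - {d}" "d \<in> A" using x assms(2,3) by (auto simp: dominant_def)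
  show "maj_strict Q' x b"
  proof (cases "b = d")
    case True
    have "g Q' x d = g Q x d + 2 * int n"
      using margins \<open>x \<in> A - {d}\<close> \<open>d \<in> A\<close> by (simp add: demote_shift_def)
    then show ?thesis using True abs_g_le_card_electorate[OF assms(1), of x d] assms(5)
      by (simp add: maj_strict_iff_g_pos)
  next
    case False
    then have "maj_strict Q x b" using assms(2) x b by (auto simp: dominant_def)
    then show ?thesis
      using maj_strict_demotion_other[OF margins \<open>x \<in> A - {d}\<close>] b False by simp
  qed
qed

lemma ex_dominant_avoiding_unchosen:
  assumes "finite A" "A \<noteq> {}" "is_scc A f" "pairwise_scc A f" "strategyproof A f"
    and "is_profile A Q" "d \<in> TC A Q" "d \<notin> f Q" "TC A Q \<noteq> {d}"
    and below_kf: "\<forall>P. is_profile A P \<longrightarrow> card (TC A P) < card (TC A Q) \<longrightarrow> TC A P \<subseteq> f P"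
  shows "\<exists>T. dominant (A - {d}) Q T \<and> T \<subseteq> f Q"
proof -
  let ?C = "TC A Q"
  have CA: "?C \<subseteq> A" and dA: "d \<in> A" using TC_subset[OF assms(1,2)] assms(7) by auto
  have finE: "finite (electorate Q)" using assms(6) by (simp add: is_profile_def)
  obtain Q' where Q': "is_profile A Q'" "f Q' = f Q" and margins:
    "\<forall>a\<in>A. \<forall>b\<in>A. g Q' a b = g Q a b + int (Suc (card (electorate Q))) * demote_shift (A - {d}) d a b"
    using ex_repeated_demotion_of_unchosen[OF assms(1,3-6) dA assms(8)] by blast
  have "dominant A Q' (?C - {d})"
    using dominant_diff_demoted[OF finE TC_dominant[OF assms(1,2)] assms(7,9) _ margins] by simp
  then have T_sub: "TC A Q' \<subseteq> ?C - {d}" by (rule TC_subset_dominant[OF assms(1,2)])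
  then have "card (TC A Q') < card ?C"
    using assms(7) finite_subset[OF CA assms(1)] by (intro psubset_card_mono) auto
  then have "TC A Q' \<subseteq> f Q" using below_kf Q'(1,2) by auto
  moreover have "dominant (A - {d}) Q (TC A Q')"
    using TC_dominant[OF assms(1,2), of Q'] T_sub CA maj_strict_demotion_other[OF margins]
    unfolding dominant_def by blast
  ultimately show ?thesis by blast
qed

lemma dominant_of_dominant_avoiding:
  assumes T\<^sub>1: "dominant (A - {z}) R T\<^sub>1" and T\<^sub>2: "dominant (A - {y}) R T\<^sub>2"
    and "y \<notin> T\<^sub>1" "z \<notin> T\<^sub>2" "y \<in> A" "z \<in> A" "y \<noteq> z"
  shows "dominant A R T\<^sub>1 \<or> dominant A R T\<^sub>2"
proof -
  have "T\<^sub>1 \<subseteq> T\<^sub>2 \<or> T\<^sub>2 \<subseteq> T\<^sub>1"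
  proof (rule ccontr)
    assume "\<not> (T\<^sub>1 \<subseteq> T\<^sub>2 \<or> T\<^sub>2 \<subseteq> T\<^sub>1)"
    then obtain s t where "t \<in> T\<^sub>1" "t \<notin> T\<^sub>2" "s \<in> T\<^sub>2" "s \<notin> T\<^sub>1" by blast
    then have "maj_strict R s t" "maj_strict R t s"
      using assms(1-4) unfolding dominant_def by blast+
    then show False by (simp add: maj_strict_def)
  qed
  then show ?thesis
  proof
    assume "T\<^sub>1 \<subseteq> T\<^sub>2"
    then have "\<forall>t\<in>T\<^sub>1. maj_strict R t z" using assms(4,6,7) T\<^sub>2 unfolding dominant_def by blast
    then have "dominant A R T\<^sub>1" by (rule dominant_insert[OF T\<^sub>1 assms(6)])
    then show ?thesis ..
  next
    assume "T\<^sub>2 \<subseteq> T\<^sub>1"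
    then have "\<forall>t\<in>T\<^sub>2. maj_strict R t y" using assms(3,5,7) T\<^sub>1 unfolding dominant_def by blast
    then have "dominant A R T\<^sub>2" by (rule dominant_insert[OF T\<^sub>2 assms(5)])
    then show ?thesis ..
  qed
qed

lemma TC_minus_unchosen_subset:
  assumes "finite A" "A \<noteq> {}" "is_scc A f" "pairwise_scc A f" "strategyproof A f"
    and "is_profile A Q" "y \<in> TC A Q" "y \<notin> f Q"
    and "\<forall>P. is_profile A P \<longrightarrow> card (TC A P) < card (TC A Q) \<longrightarrow> TC A P \<subseteq> f P"
  shows "TC A Q - {y} \<subseteq> f Q"
proof
  fix z assume z: "z \<in> TC A Q - {y}"
  show "z \<in> f Q"
  proof (rule ccontr)
    assume "z \<notin> f Q"
    have "z \<in> TC A Q" "TC A Q \<noteq> {z}" using z assms(7) by auto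
    then obtain T\<^sub>1 where T\<^sub>1: "dominant (A - {z}) Q T\<^sub>1" "T\<^sub>1 \<subseteq> f Q"
      using ex_dominant_avoiding_unchosen[OF assms(1-6) _ \<open>z \<notin> f Q\<close> _ assms(9)] by blast
    obtain T\<^sub>2 where T\<^sub>2: "dominant (A - {y}) Q T\<^sub>2" "T\<^sub>2 \<subseteq> f Q"
      using ex_dominant_avoiding_unchosen[OF assms(1-8) _ assms(9)] z by blast
    have "y \<in> A" "z \<in> A" using z assms(7) TC_subset[OF assms(1,2)] by auto
    then have "dominant A Q T\<^sub>1 \<or> dominant A Q T\<^sub>2"
      using dominant_of_dominant_avoiding[OF T\<^sub>1(1) T\<^sub>2(1)] T\<^sub>1(2) T\<^sub>2(2) assms(8) \<open>z \<notin> f Q\<close> z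
      by blast
    then show False
      using TC_subset_dominant[OF assms(1,2)] T\<^sub>1(2) T\<^sub>2(2) assms(7,8) z \<open>z \<notin> f Q\<close> by blast
  qed
qed

lemma demoted_drops_out_if_choice_changes:
  assumes "finite A" "is_scc A f" "pairwise_scc A f" "strategyproof A f"
    and "is_profile A R" "is_profile A R'" "X \<subseteq> f R" "y \<in> f R" "y \<notin> X"
    and margins: "\<forall>a\<in>A. \<forall>b\<in>A. g R' a b = g R a b + demote_shift X y a b"
    and "f R' \<noteq> f R"
  shows "y \<notin> f R'"
proof
  assume "y \<in> f R'"
  \<comment> \<open>f R' - f R comes first and f R - f R' last, so that f R' is Fishburn-better than f R;
    only X lies between the old tier 4 and the new tier 9 of y.\<close>
  define tier :: "'a \<Rightarrow> nat" where "tier = (\<lambda>x. if x = y then 4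
    else if x \<in> X then (if x \<in> f R' then 6 else 8)
    else if x \<in> f R' then (if x \<in> f R then 2 else 0) else 10)"
  have "X \<subseteq> A" using assms(2,5,7) by (auto simp: is_scc_def)
  then have "{x \<in> A. tier y < tier x \<and> tier x < 9} = X" using assms(9) by (auto simp: tier_def)
  then have "f R' = f R"
    using margins assms(7-9) \<open>y \<in> f R'\<close>
    by (intro choice_unchanged_by_demotion[OF assms(1-6), of tier y 9]) (auto simp: tier_def)
  then show False using assms(11) by contradiction
qed

lemma g_eq_add_demote_shift:
  assumes "y \<notin> X" "\<forall>x\<in>X. g R' x y = 2 + g R x y"
    and "\<forall>x'\<in>A. \<forall>y'\<in>A. \<not> (x' \<in> X \<and> y' = y) \<and> \<not> (x' = y \<and> y' \<in> X) \<longrightarrow> g R' x' y' = g R x' y'"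
  shows "\<forall>a\<in>A. \<forall>b\<in>A. g R' a b = g R a b + demote_shift X y a b"
proof (intro ballI)
  fix a b assume ab: "a \<in> A" "b \<in> A"
  consider "a \<in> X" "b = y" | "a = y" "b \<in> X" | "\<not> (a \<in> X \<and> b = y)" "\<not> (a = y \<and> b \<in> X)"
    by blast
  then show "g R' a b = g R a b + demote_shift X y a b"
  proof cases
    case 1
    then show ?thesis using assms(2) by (simp add: demote_shift_def)
  next
    case 2
    then have "g R' b a = 2 + g R b a" using assms(2) by simp
    then show ?thesis
      using 2 assms(1) g_antisym[of R' a b] g_antisym[of R a b] by (simp add: demote_shift_def)
  next
    case 3
    then show ?thesis using assms(3) ab by (simp add: demote_shift_def)
  qed
qed

theorem lemma9:
  fixes A :: "'a set" and f :: "'a profile \<Rightarrow> 'a set" and R R' :: "'a profile"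
    and X :: "'a set" and y :: 'a
  assumes "finite A"
    and "is_scc A f"
    and "pairwise_scc A f"
    and "strongly_condorcet_consistent A f"
    and "homogeneous A f"
    and "strategyproof A f"
    and "4 \<le> kf A f" and "kf A f \<le> card A"
    and "is_profile A R" and "is_profile A R'"
    and "TC A R = TC A R'"
    and "card (TC A R) = kf A f"
    and "X \<subseteq> f R \<inter> TC A R"
    and "y \<in> (f R \<inter> TC A R) - X"
    and "\<forall>x\<in>X. g R' x y = 2 + g R x y"
    and "\<forall>x'\<in>A. \<forall>y'\<in>A. \<not> (x' \<in> X \<and> y' = y) \<and> \<not> (x' = y \<and> y' \<in> X)
           \<longrightarrow> g R' x' y' = g R x' y'"
  shows "f R = f R' \<or> f R' \<inter> TC A R' = TC A R' - {y}"
proof (cases "f R' = f R")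
  case False
  have "A \<noteq> {}" using assms(7,8) by auto
  have margins: "\<forall>a\<in>A. \<forall>b\<in>A. g R' a b = g R a b + demote_shift X y a b"
    using assms(14-16) by (intro g_eq_add_demote_shift) auto
  have "y \<notin> f R'"
    by (rule demoted_drops_out_if_choice_changes[OF assms(1-3,6,9,10) _ _ _ margins False])
      (use assms(13,14) in auto)
  moreover have "TC A R' - {y} \<subseteq> f R'"
    using TC_subset_if_card_less_kf[OF assms(1) \<open>A \<noteq> {}\<close>] assms(11,12,14)
    by (intro TC_minus_unchosen_subset[OF assms(1) \<open>A \<noteq> {}\<close> assms(2,3,6,10) _ \<open>y \<notin> f R'\<close>]) auto
  ultimately show ?thesis by blast
qed simp

end
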